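(* Let $f\in\ell^2(V,w)$ with $\|f\|_w=1$ and let $k\ge1$ be an integer. Then at least one of the following holds: (i) $\beta(f)\le8k\,\mathcal R^+(f)$; (ii) $\beta(f)>0$ and there exist $k$ disjointly supported nonzero functions $f_1,\dots,f_k\in\ell^2(V,w)$ such that for all $i$, $\mathcal R^+(f_i)\le256\,k^2\,\mathcal R^+(f)^2/\beta(f)^2$.
   Context: $G=(V,E,w)$ finite undirected, positive edge weights, $w(v)=\sum_{u\sim v}w(u,v)\ge1$, $\mathrm{vol}(S)=\sum_{v\in S}w(v)$, $\|f\|_w^2=\sum_vw(v)f(v)^2$. For disjoint $L,R$ with $L\cup R\ne\emptyset$, $\beta(L,R)=\frac{2w(E(L))+2w(E(R))+w(E(L\cup R,V\setminus(L\cup R)))}{\mathrm{vol}(L\cup R)}$, where $w(E(S))$ is the weight of edges inside $S$ and $w(E(S,T))$ that of edges between disjoint $S,T$. For $t>0$, $L_f(t)=\{v:f(v)\le-t\}$, $R_f(t)=\{v:f(v)\ge t\}$; $\beta(f)=\min\{\beta(L_f(t),R_f(t)):t>0,\ L_f(t)\cup R_f(t)\ne\emptyset\}$. For nonzero $h$, $\mathcal R^+(h)=\sum_{\{u,v\}\in E}w(u,v)(h(u)+h(v))^2/\|h\|_w^2$. Functions are disjointly supported if their supports are pairwise disjoint. *)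

theory Defs
  imports Complex_Main
begin

definition weighted_graph :: "'a set \<Rightarrow> ('a \<Rightarrow> 'a \<Rightarrow> real) \<Rightarrow> bool" where
  "weighted_graph V wt \<longleftrightarrow> finite V
     \<and> (\<forall>u v. wt u v = wt v u)
     \<and> (\<forall>u v. wt u v \<ge> 0)
     \<and> (\<forall>u v. wt u v > 0 \<longrightarrow> u \<in> V \<and> v \<in> V \<and> u \<noteq> v)"

definition edges :: "'a set \<Rightarrow> ('a \<Rightarrow> 'a \<Rightarrow> real) \<Rightarrow> 'a set set" where
  "edges V wt = {{u, v} | u v. u \<in> V \<and> v \<in> V \<and> u \<noteq> v \<and> wt u v > 0}"

definition ew :: "('a \<Rightarrow> 'a \<Rightarrow> real) \<Rightarrow> 'a set \<Rightarrow> real" where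
  "ew wt e = (THE c. \<exists>u v. e = {u, v} \<and> c = wt u v)"

definition deg :: "'a set \<Rightarrow> ('a \<Rightarrow> 'a \<Rightarrow> real) \<Rightarrow> 'a \<Rightarrow> real" where
  "deg V wt v = (\<Sum>u\<in>V. wt u v)"

definition vol :: "'a set \<Rightarrow> ('a \<Rightarrow> 'a \<Rightarrow> real) \<Rightarrow> 'a set \<Rightarrow> real" where
  "vol V wt S = (\<Sum>v\<in>S. deg V wt v)"

definition wnorm2 :: "'a set \<Rightarrow> ('a \<Rightarrow> 'a \<Rightarrow> real) \<Rightarrow> ('a \<Rightarrow> real) \<Rightarrow> real" where
  "wnorm2 V wt f = (\<Sum>v\<in>V. deg V wt v * (f v)\<^sup>2)"

definition wE_in :: "'a set \<Rightarrow> ('a \<Rightarrow> 'a \<Rightarrow> real) \<Rightarrow> 'a set \<Rightarrow> real" where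
  "wE_in V wt S = (\<Sum>e\<in>{e\<in>edges V wt. e \<subseteq> S}. ew wt e)"

definition wE_between :: "'a set \<Rightarrow> ('a \<Rightarrow> 'a \<Rightarrow> real) \<Rightarrow> 'a set \<Rightarrow> 'a set \<Rightarrow> real" where
  "wE_between V wt S T = (\<Sum>e\<in>{e\<in>edges V wt. e \<inter> S \<noteq> {} \<and> e \<inter> T \<noteq> {}}. ew wt e)"

definition beta_LR :: "'a set \<Rightarrow> ('a \<Rightarrow> 'a \<Rightarrow> real) \<Rightarrow> 'a set \<Rightarrow> 'a set \<Rightarrow> real" where
  "beta_LR V wt L R =
     (2 * wE_in V wt L + 2 * wE_in V wt R + wE_between V wt (L \<union> R) (V - (L \<union> R)))
       / vol V wt (L \<union> R)"

definition Lset :: "'a set \<Rightarrow> ('a \<Rightarrow> real) \<Rightarrow> real \<Rightarrow> 'a set" where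
  "Lset V f t = {v\<in>V. f v \<le> - t}"

definition Rset :: "'a set \<Rightarrow> ('a \<Rightarrow> real) \<Rightarrow> real \<Rightarrow> 'a set" where
  "Rset V f t = {v\<in>V. f v \<ge> t}"

definition beta :: "'a set \<Rightarrow> ('a \<Rightarrow> 'a \<Rightarrow> real) \<Rightarrow> ('a \<Rightarrow> real) \<Rightarrow> real" where
  "beta V wt f = Min {beta_LR V wt (Lset V f t) (Rset V f t) | t.
                        t > 0 \<and> Lset V f t \<union> Rset V f t \<noteq> {}}"

definition Rplus :: "'a set \<Rightarrow> ('a \<Rightarrow> 'a \<Rightarrow> real) \<Rightarrow> ('a \<Rightarrow> real) \<Rightarrow> real" where
  "Rplus V wt h = (\<Sum>e\<in>edges V wt. ew wt e * (\<Sum>x\<in>e. h x)\<^sup>2) / wnorm2 V wt h"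

definition supp :: "'a set \<Rightarrow> ('a \<Rightarrow> real) \<Rightarrow> 'a set" where
  "supp V h = {v\<in>V. h v \<noteq> 0}"

end

theory Submission
  imports Defs "HOL-Analysis.Analysis"
begin

text \<open>Put \<open>R = \<R>\<^sup>+(f)\<close> and suppose \<open>\<beta>(f) > 8kR\<close>. Cut the range of \<open>|f|\<close> greedily into consecutive
  intervals \<open>[t\<^sub>i, t\<^sub>i\<^sub>+\<^sub>1]\<close> such that the tent functions \<open>sgn f \<cdot> tent t\<^sub>i t\<^sub>i\<^sub>+\<^sub>1 |f|\<close> all have mass
  \<open>\<mu> = \<beta>\<^sup>2 / (256 k\<^sup>2 (k + 1) R)\<close>. If \<open>2k\<close> intervals are obtained, the tents are disjointly
  supported, their energies sum to at most \<open>R\<close>, and so \<open>k\<close> of them have Rayleigh quotient at most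
  \<open>256 k\<^sup>2 R\<^sup>2 / \<beta>\<^sup>2\<close>. Otherwise \<open>|f|\<close> is \<open>\<ell>\<^sup>2\<close>-close to a set \<open>T\<close> of at most \<open>2k\<close> levels, and the coarea
  inequality \<open>\<beta>(f) \<cdot> \<Sum> w(v) \<Phi>(|f v|) \<le> \<Sum>\<^sub>e w(e) |\<Sum>\<^sub>x\<^sub>\<in>\<^sub>e sgn (f x) \<Phi>(|f x|)|\<close> for
  \<open>\<Phi>(x) = \<integral>\<^sub>0\<^sup>x d(s, T) ds \<ge> x\<^sup>2 / (4|T|)\<close>, yields \<open>\<beta>(f) \<le> 8kR\<close>.\<close>

lemma edgesE:
  assumes "e \<in> edges V wt"
  obtains u v where "e = {u, v}" "u \<in> V" "v \<in> V" "u \<noteq> v" "wt u v > 0"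
  using assms unfolding edges_def by blast

lemma ew_doubleton:
  assumes "weighted_graph V wt"
  shows "ew wt {u, v} = wt u v"
  unfolding ew_def
proof (rule the_equality)
  fix c assume "\<exists>u' v'. {u, v} = {u', v'} \<and> c = wt u' v'"
  then show "c = wt u v"
    using assms unfolding weighted_graph_def by (auto simp: doubleton_eq_iff)
qed blast

lemma ew_nonneg:
  assumes "weighted_graph V wt" "e \<in> edges V wt"
  shows "ew wt e \<ge> 0"
  using assms(2) by (auto elim!: edgesE simp: ew_doubleton[OF assms(1)])

lemma finite_edges:
  assumes "weighted_graph V wt"
  shows "finite (edges V wt)"
proof (rule finite_subset)
  show "edges V wt \<subseteq> Pow V" unfolding edges_def by auto
qed (use assms in \<open>simp add: weighted_graph_def\<close>)

lemma deg_nonneg: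
  assumes "weighted_graph V wt"
  shows "deg V wt v \<ge> 0"
  using assms unfolding weighted_graph_def deg_def by (simp add: sum_nonneg)

lemma bij_betw_darts:
  assumes G: "weighted_graph V wt"
  shows "bij_betw (\<lambda>q. ({fst q, snd q}, fst q))
           (Sigma V (\<lambda>x. {u\<in>V. wt x u > 0})) (Sigma (edges V wt) (\<lambda>e. e))"
    (is "bij_betw ?h ?P ?D")
proof (rule bij_betw_imageI)
  have sym: "\<And>a b. wt a b = wt b a" and pos: "\<And>a b. wt a b > 0 \<Longrightarrow> a \<in> V \<and> b \<in> V \<and> a \<noteq> b"
    using G unfolding weighted_graph_def by blast+
  show "inj_on ?h ?P"
    by (rule inj_onI) (auto simp: doubleton_eq_iff dest: pos)
  have "p \<in> ?h ` ?P" if p: "p \<in> ?D" for p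
  proof -
    obtain e x where ex: "p = (e, x)" "e \<in> edges V wt" "x \<in> e"
      using p by blast
    then obtain u v where uv: "e = {u, v}" "u \<in> V" "v \<in> V" "wt u v > 0"
      by (auto elim!: edgesE)
    consider "x = u" | "x = v" using ex uv by blast
    then show ?thesis
    proof cases
      case 1
      then show ?thesis using ex uv by (auto intro!: image_eqI[where x="(u, v)"])
    next
      case 2
      then show ?thesis using ex uv sym[of u v]
        by (auto intro!: image_eqI[where x="(v, u)"] simp: insert_commute)
    qed
  qed
  moreover have "?h ` ?P \<subseteq> ?D"
    unfolding edges_def using pos by fastforce
  ultimately show "?h ` ?P = ?D" by blast
qed

lemma edges_handshake:
  assumes G: "weighted_graph V wt"
  shows "(\<Sum>e\<in>edges V wt. ew wt e * (\<Sum>x\<in>e. F x)) = (\<Sum>v\<in>V. deg V wt v * F v)"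
proof -
  have finV: "finite V" and sym: "\<And>a b. wt a b = wt b a" and nn: "\<And>a b. wt a b \<ge> 0"
    using G unfolding weighted_graph_def by blast+
  let ?E = "edges V wt"
  have "(\<Sum>e\<in>?E. ew wt e * (\<Sum>x\<in>e. F x)) = (\<Sum>e\<in>?E. \<Sum>x\<in>e. ew wt e * F x)"
    by (simp add: sum_distrib_left)
  also have "\<dots> = (\<Sum>p\<in>Sigma ?E (\<lambda>e. e). ew wt (fst p) * F (snd p))"
    using sum.Sigma[OF finite_edges[OF G], of "\<lambda>e. e" "\<lambda>e x. ew wt e * F x"]
    by (simp add: split_def) (blast elim: edgesE)
  also have "\<dots> = (\<Sum>q\<in>Sigma V (\<lambda>x. {u\<in>V. wt x u > 0}). wt (fst q) (snd q) * F (fst q))"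
    using sum.reindex_bij_betw[OF bij_betw_darts[OF G], of "\<lambda>p. ew wt (fst p) * F (snd p)"]
    by (simp add: ew_doubleton[OF G])
  also have "\<dots> = (\<Sum>x\<in>V. \<Sum>u\<in>{u\<in>V. wt x u > 0}. wt x u * F x)"
    using sum.Sigma[OF finV, of "\<lambda>x. {u\<in>V. wt x u > 0}" "\<lambda>x u. wt x u * F x"] finV
    by (simp add: split_def)
  also have "\<dots> = (\<Sum>x\<in>V. \<Sum>u\<in>V. wt x u * F x)"
    by (intro sum.cong refl sum.mono_neutral_left) (use finV nn in \<open>auto simp: order_le_less\<close>)
  also have "\<dots> = (\<Sum>v\<in>V. deg V wt v * F v)"
    unfolding deg_def by (simp add: sum_distrib_right sym)
  finally show ?thesis .
qed

definition edge_energy :: "'a set \<Rightarrow> ('a \<Rightarrow> 'a \<Rightarrow> real) \<Rightarrow> ('a \<Rightarrow> real) \<Rightarrow> real" where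
  "edge_energy V wt h = (\<Sum>e\<in>edges V wt. ew wt e * (\<Sum>x\<in>e. h x)\<^sup>2)"

lemma Rplus_edge_energy: "Rplus V wt h = edge_energy V wt h / wnorm2 V wt h"
  unfolding Rplus_def edge_energy_def ..

lemma edge_energy_nonneg:
  assumes "weighted_graph V wt"
  shows "edge_energy V wt h \<ge> 0"
  unfolding edge_energy_def by (intro sum_nonneg mult_nonneg_nonneg ew_nonneg[OF assms]) auto

section \<open>The coarea inequality for \<open>\<beta>\<close>\<close>

text \<open>\<open>threshold_sign t \<circ> f\<close> is the indicator of \<open>R_f(t)\<close> minus that of \<open>L_f(t)\<close>.\<close>
definition threshold_sign :: "real \<Rightarrow> real \<Rightarrow> real" where
  "threshold_sign t y = (if t \<le> y then 1 else if y \<le> - t then -1 else 0)"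

lemma threshold_sign_eq_sgn: "t > 0 \<Longrightarrow> threshold_sign t y = sgn y * (if t \<le> \<bar>y\<bar> then 1 else 0)"
  by (auto simp: threshold_sign_def sgn_if)

definition beta_numerator :: "'a set \<Rightarrow> ('a \<Rightarrow> 'a \<Rightarrow> real) \<Rightarrow> 'a set \<Rightarrow> 'a set \<Rightarrow> real" where
  "beta_numerator V wt L R =
     2 * wE_in V wt L + 2 * wE_in V wt R + wE_between V wt (L \<union> R) (V - (L \<union> R))"

lemma beta_numerator_threshold:
  assumes G: "weighted_graph V wt" and t: "t > 0"
  shows "beta_numerator V wt (Lset V f t) (Rset V f t)
       = (\<Sum>e\<in>edges V wt. ew wt e * \<bar>\<Sum>x\<in>e. threshold_sign t (f x)\<bar>)"
proof -
  let ?E = "edges V wt" and ?L = "Lset V f t" and ?R = "Rset V f t"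
  have finE: "finite ?E" using finite_edges[OF G] .
  have wE_in: "wE_in V wt S = (\<Sum>e\<in>?E. ew wt e * (if e \<subseteq> S then 1 else 0))" for S
    unfolding wE_in_def by (simp add: sum.inter_filter[OF finE] if_distrib cong: if_cong)
  have wE_between: "wE_between V wt S T
      = (\<Sum>e\<in>?E. ew wt e * (if e \<inter> S \<noteq> {} \<and> e \<inter> T \<noteq> {} then 1 else 0))" for S T
    unfolding wE_between_def by (simp add: sum.inter_filter[OF finE] if_distrib cong: if_cong)
  have edge_count: "2 * (if e \<subseteq> ?L then 1 else 0) + 2 * (if e \<subseteq> ?R then 1 else 0)
     + (if e \<inter> (?L \<union> ?R) \<noteq> {} \<and> e \<inter> (V - (?L \<union> ?R)) \<noteq> {} then 1 else 0)
     = \<bar>\<Sum>x\<in>e. threshold_sign t (f x)\<bar>" if e: "e \<in> ?E" for e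
  proof -
    obtain u v where uv: "e = {u, v}" "u \<in> V" "v \<in> V" "u \<noteq> v"
      using e by (auto elim: edgesE)
    show ?thesis
      using uv t unfolding Lset_def Rset_def threshold_sign_def
      by (cases "t \<le> f u"; cases "f u \<le> -t"; cases "t \<le> f v"; cases "f v \<le> -t") auto
  qed
  have "beta_numerator V wt ?L ?R = (\<Sum>e\<in>?E. ew wt e * (2 * (if e \<subseteq> ?L then 1 else 0)
     + 2 * (if e \<subseteq> ?R then 1 else 0)
     + (if e \<inter> (?L \<union> ?R) \<noteq> {} \<and> e \<inter> (V - (?L \<union> ?R)) \<noteq> {} then 1 else 0)))"
    unfolding beta_numerator_def wE_in wE_between
    by (simp add: sum.distrib sum_distrib_left algebra_simps)
  also have "\<dots> = (\<Sum>e\<in>?E. ew wt e * \<bar>\<Sum>x\<in>e. threshold_sign t (f x)\<bar>)"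
    by (rule sum.cong[OF refl]) (simp only: edge_count)
  finally show ?thesis .
qed

lemma vol_threshold:
  assumes G: "weighted_graph V wt" and t: "t > 0"
  shows "vol V wt (Lset V f t \<union> Rset V f t) = (\<Sum>v\<in>V. deg V wt v * \<bar>threshold_sign t (f v)\<bar>)"
proof -
  have finV: "finite V" using G unfolding weighted_graph_def by blast
  have "vol V wt (Lset V f t \<union> Rset V f t) = (\<Sum>v\<in>{v\<in>V. f v \<le> -t \<or> f v \<ge> t}. deg V wt v)"
    unfolding vol_def Lset_def Rset_def by (rule sum.cong) auto
  also have "\<dots> = (\<Sum>v\<in>V. if f v \<le> -t \<or> f v \<ge> t then deg V wt v else 0)"
    by (rule sum.inter_filter[OF finV])
  also have "\<dots> = (\<Sum>v\<in>V. deg V wt v * \<bar>threshold_sign t (f v)\<bar>)"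
    using t by (intro sum.cong) (auto simp: threshold_sign_def)
  finally show ?thesis .
qed

lemma vol_pos:
  assumes G: "weighted_graph V wt" and D: "\<forall>v\<in>V. deg V wt v \<ge> 1"
    and S: "S \<subseteq> V" "S \<noteq> {}"
  shows "vol V wt S > 0"
proof -
  have "finite S" using S G finite_subset unfolding weighted_graph_def by blast
  then have "(\<Sum>v\<in>S. 1::real) > 0" using S by (simp add: card_gt_0_iff)
  also have "(\<Sum>v\<in>S. 1) \<le> vol V wt S"
    unfolding vol_def by (rule sum_mono) (use D S in auto)
  finally show ?thesis .
qed

lemma beta_mult_vol_le:
  assumes G: "weighted_graph V wt" and D: "\<forall>v\<in>V. deg V wt v \<ge> 1"
    and t: "t > 0" and ne: "Lset V f t \<union> Rset V f t \<noteq> {}"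
  shows "beta V wt f * vol V wt (Lset V f t \<union> Rset V f t)
       \<le> beta_numerator V wt (Lset V f t) (Rset V f t)"
proof -
  have finV: "finite V" using G unfolding weighted_graph_def by blast
  let ?A = "{beta_LR V wt (Lset V f t) (Rset V f t) | t. t > 0 \<and> Lset V f t \<union> Rset V f t \<noteq> {}}"
  have "?A \<subseteq> (\<lambda>(L, R). beta_LR V wt L R) ` (Pow V \<times> Pow V)"
    by (auto simp: Lset_def Rset_def)
  then have "finite ?A"
    using finV by (meson finite_Pow_iff finite_SigmaI finite_imageI finite_subset)
  then have "beta V wt f \<le> beta_LR V wt (Lset V f t) (Rset V f t)"
    unfolding beta_def by (rule Min_le) (use t ne in blast)
  moreover have "vol V wt (Lset V f t \<union> Rset V f t) > 0"
    by (rule vol_pos[OF G D _ ne]) (auto simp: Lset_def Rset_def)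
  ultimately show ?thesis
    unfolding beta_LR_def beta_numerator_def by (simp add: pos_le_divide_eq mult.commute)
qed

text \<open>For fixed \<open>y, z\<close> all the sums \<open>threshold_sign t y + threshold_sign t z\<close>, \<open>t > 0\<close>,
  have a common sign, namely the sign of whichever of \<open>y, z\<close> is larger in absolute value.\<close>
lemma abs_sum_threshold_sign:
  assumes c: "\<And>j. j \<in> J \<Longrightarrow> c j \<ge> 0" and \<tau>: "\<And>j. j \<in> J \<Longrightarrow> \<tau> j > 0"
  shows "\<bar>\<Sum>j\<in>J. c j * (threshold_sign (\<tau> j) y + threshold_sign (\<tau> j) z)\<bar>
       = (\<Sum>j\<in>J. c j * \<bar>threshold_sign (\<tau> j) y + threshold_sign (\<tau> j) z\<bar>)"
proof -
  let ?s = "\<lambda>j. threshold_sign (\<tau> j) y + threshold_sign (\<tau> j) z"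
  define \<sigma> :: real
    where "\<sigma> = (if \<bar>y\<bar> \<ge> \<bar>z\<bar> then (if y \<ge> 0 then 1 else -1) else (if z \<ge> 0 then 1 else -1))"
  have \<sigma>: "\<sigma> * ?s j = \<bar>?s j\<bar>" if "j \<in> J" for j
    using \<tau>[OF that] unfolding \<sigma>_def threshold_sign_def by auto
  have "\<bar>\<Sum>j\<in>J. c j * ?s j\<bar> = \<bar>\<sigma> * (\<Sum>j\<in>J. c j * ?s j)\<bar>"
    unfolding \<sigma>_def by (simp add: abs_mult)
  also have "\<sigma> * (\<Sum>j\<in>J. c j * ?s j) = (\<Sum>j\<in>J. c j * \<bar>?s j\<bar>)"
    by (simp add: sum_distrib_left \<sigma>[symmetric] algebra_simps cong: sum.cong)
  also have "\<bar>\<dots>\<bar> = (\<Sum>j\<in>J. c j * \<bar>?s j\<bar>)"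
    using c by (simp add: sum_nonneg)
  finally show ?thesis .
qed

lemma layer_decomposition:
  fixes X :: "real set" and \<Phi> :: "real \<Rightarrow> real"
  assumes "finite X" and X: "\<And>x. x \<in> X \<Longrightarrow> x > 0"
    and mono: "\<And>x y. 0 \<le> x \<Longrightarrow> x \<le> y \<Longrightarrow> \<Phi> x \<le> \<Phi> y" and \<Phi>0: "\<Phi> 0 = 0"
  obtains n :: nat and \<tau> c where "\<And>j. j < n \<Longrightarrow> \<tau> j \<in> X" "\<And>j. j < n \<Longrightarrow> c j \<ge> 0"
    "\<And>x. x = 0 \<or> x \<in> X \<Longrightarrow> \<Phi> x = (\<Sum>j<n. c j * (if \<tau> j \<le> x then 1 else 0))"
proof -
  define xs where "xs = sorted_list_of_set X"
  have sorted: "sorted_wrt (<) xs" and set_xs: "set xs = X"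
    unfolding xs_def using \<open>finite X\<close> by simp_all
  have less_iff: "xs ! i < xs ! j \<longleftrightarrow> i < j" if "i < length xs" "j < length xs" for i j
    using that sorted by (metis nat_neq_iff not_less_iff_gr_or_eq sorted_wrt_nth_less)
  define \<Psi> where "\<Psi> m = (if m = 0 then 0 else \<Phi> (xs ! (m - 1)))" for m
  have "xs ! j \<in> X" if "j < length xs" for j
    using that set_xs by auto
  moreover have "\<Psi> (Suc j) - \<Psi> j \<ge> 0" if j: "j < length xs" for j
  proof (cases j)
    case 0
    then show ?thesis
      using mono[of 0 "xs ! 0"] X[of "xs ! 0"] nth_mem[of 0 xs] j set_xs \<Phi>0
      unfolding \<Psi>_def by auto
  next
    case (Suc i)
    then have "0 < xs ! i" "xs ! i < xs ! j" using j X set_xs less_iff by auto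
    then show ?thesis using mono[of "xs ! i" "xs ! j"] Suc unfolding \<Psi>_def by auto
  qed
  moreover have "\<Phi> x = (\<Sum>j<length xs. (\<Psi> (Suc j) - \<Psi> j) * (if xs ! j \<le> x then 1 else 0))"
    if x: "x = 0 \<or> x \<in> X" for x
  proof (cases "x = 0")
    case True
    have "xs ! j > 0" if "j < length xs" for j using that X set_xs by auto
    then show ?thesis using True \<Phi>0 by (simp add: not_le[symmetric])
  next
    case False
    then obtain i where i: "i < length xs" "xs ! i = x" using x set_xs by (auto simp: in_set_conv_nth)
    have "(\<Sum>j<length xs. (\<Psi> (Suc j) - \<Psi> j) * (if xs ! j \<le> x then 1 else 0))
        = (\<Sum>j<Suc i. \<Psi> (Suc j) - \<Psi> j)"
      using i less_iff by (intro sum.mono_neutral_cong_right) (auto simp: not_less[symmetric])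
    also have "\<dots> = \<Phi> x" using i by (simp only: sum_lessThan_telescope) (simp add: \<Psi>_def)
    finally show ?thesis by simp
  qed
  ultimately show ?thesis
    by (rule that[of "length xs" "\<lambda>j. xs ! j" "\<lambda>j. \<Psi> (Suc j) - \<Psi> j"])
qed

lemma sum_deg_threshold_layers:
  assumes G: "weighted_graph V wt" and \<tau>: "\<And>j. j < n \<Longrightarrow> \<tau> j > 0"
    and g: "\<And>v. v \<in> V \<Longrightarrow> g v = (\<Sum>j<n. c j * \<bar>threshold_sign (\<tau> j) (f v)\<bar>)"
  shows "(\<Sum>v\<in>V. deg V wt v * g v) = (\<Sum>j<n. c j * vol V wt (Lset V f (\<tau> j) \<union> Rset V f (\<tau> j)))"
proof -
  have "(\<Sum>v\<in>V. deg V wt v * g v)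
      = (\<Sum>j<n. c j * (\<Sum>v\<in>V. deg V wt v * \<bar>threshold_sign (\<tau> j) (f v)\<bar>))"
    by (simp add: g sum_distrib_left algebra_simps sum.swap[of _ V] cong: sum.cong)
  then show ?thesis by (simp add: vol_threshold[OF G \<tau>])
qed

lemma sum_edges_threshold_layers:
  assumes G: "weighted_graph V wt" and \<tau>: "\<And>j. j < n \<Longrightarrow> \<tau> j > 0"
    and c: "\<And>j. j < n \<Longrightarrow> c j \<ge> 0"
    and g: "\<And>v. v \<in> V \<Longrightarrow> g v = (\<Sum>j<n. c j * threshold_sign (\<tau> j) (f v))"
  shows "(\<Sum>e\<in>edges V wt. ew wt e * \<bar>\<Sum>x\<in>e. g x\<bar>)
       = (\<Sum>j<n. c j * beta_numerator V wt (Lset V f (\<tau> j)) (Rset V f (\<tau> j)))"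
proof -
  let ?sg = "threshold_sign"
  have edge: "\<bar>\<Sum>x\<in>e. g x\<bar> = (\<Sum>j<n. c j * \<bar>\<Sum>x\<in>e. ?sg (\<tau> j) (f x)\<bar>)"
    if e: "e \<in> edges V wt" for e
  proof -
    obtain u v where uv: "e = {u, v}" "u \<in> V" "v \<in> V" "u \<noteq> v" using e by (auto elim: edgesE)
    have "\<bar>\<Sum>x\<in>e. g x\<bar> = \<bar>\<Sum>j<n. c j * (?sg (\<tau> j) (f u) + ?sg (\<tau> j) (f v))\<bar>"
      using uv by (simp add: g sum.distrib algebra_simps)
    also have "\<dots> = (\<Sum>j<n. c j * \<bar>?sg (\<tau> j) (f u) + ?sg (\<tau> j) (f v)\<bar>)"
      using c \<tau> by (intro abs_sum_threshold_sign) auto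
    finally show ?thesis using uv by simp
  qed
  have "(\<Sum>e\<in>edges V wt. ew wt e * \<bar>\<Sum>x\<in>e. g x\<bar>)
      = (\<Sum>j<n. c j * (\<Sum>e\<in>edges V wt. ew wt e * \<bar>\<Sum>x\<in>e. ?sg (\<tau> j) (f x)\<bar>))"
    by (simp add: edge sum_distrib_left algebra_simps sum.swap[of _ "edges V wt"] cong: sum.cong)
  then show ?thesis by (simp add: beta_numerator_threshold[OF G \<tau>])
qed

text \<open>Decompose \<open>\<Phi> \<circ> |f|\<close> into the level sets of \<open>|f|\<close>; each level set satisfies
  \<open>beta_mult_vol_le\<close>, and by \<open>abs_sum_threshold_sign\<close> no cancellation occurs on an edge.\<close>
lemma beta_coarea:
  fixes \<Phi> :: "real \<Rightarrow> real"
  assumes G: "weighted_graph V wt" and D: "\<forall>v\<in>V. deg V wt v \<ge> 1"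
    and mono: "\<And>x y. 0 \<le> x \<Longrightarrow> x \<le> y \<Longrightarrow> \<Phi> x \<le> \<Phi> y" and \<Phi>0: "\<Phi> 0 = 0"
  shows "beta V wt f * (\<Sum>v\<in>V. deg V wt v * \<Phi> \<bar>f v\<bar>)
     \<le> (\<Sum>e\<in>edges V wt. ew wt e * \<bar>\<Sum>x\<in>e. sgn (f x) * \<Phi> \<bar>f x\<bar>\<bar>)"
proof -
  let ?sg = "threshold_sign" and ?X = "(\<lambda>v. \<bar>f v\<bar>) ` supp V f"
  have "finite ?X" "\<And>x. x \<in> ?X \<Longrightarrow> x > 0"
    using G by (auto simp: weighted_graph_def supp_def)
  then obtain n :: nat and \<tau> c where \<tau>: "\<And>j. j < n \<Longrightarrow> \<tau> j \<in> ?X"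
    and c: "\<And>j. j < n \<Longrightarrow> c j \<ge> 0"
    and layers: "\<And>x. x = 0 \<or> x \<in> ?X \<Longrightarrow> \<Phi> x = (\<Sum>j<n. c j * (if \<tau> j \<le> x then 1 else 0))"
    using layer_decomposition[where \<Phi>=\<Phi>, OF _ _ mono \<Phi>0] by blast
  have \<tau>_pos: "\<tau> j > 0" if "j < n" for j using \<tau>[OF that] by (auto simp: supp_def)
  have abs_layers: "\<Phi> \<bar>f v\<bar> = (\<Sum>j<n. c j * \<bar>?sg (\<tau> j) (f v)\<bar>)" if "v \<in> V" for v
    using that \<tau>_pos by (subst layers) (auto simp: supp_def threshold_sign_def intro!: sum.cong)
  have sgn_layers: "sgn (f v) * \<Phi> \<bar>f v\<bar> = (\<Sum>j<n. c j * ?sg (\<tau> j) (f v))" if "v \<in> V" for v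
    using that \<tau>_pos
    by (subst layers) (auto simp: supp_def threshold_sign_eq_sgn sum_distrib_left intro!: sum.cong)
  let ?S = "\<lambda>j. Lset V f (\<tau> j) \<union> Rset V f (\<tau> j)"
  have lhs: "(\<Sum>v\<in>V. deg V wt v * \<Phi> \<bar>f v\<bar>) = (\<Sum>j<n. c j * vol V wt (?S j))"
    by (rule sum_deg_threshold_layers[where g="\<lambda>v. \<Phi> \<bar>f v\<bar>", OF G \<tau>_pos abs_layers])
  have rhs: "(\<Sum>e\<in>edges V wt. ew wt e * \<bar>\<Sum>x\<in>e. sgn (f x) * \<Phi> \<bar>f x\<bar>\<bar>)
      = (\<Sum>j<n. c j * beta_numerator V wt (Lset V f (\<tau> j)) (Rset V f (\<tau> j)))"
    by (rule sum_edges_threshold_layers[where g="\<lambda>x. sgn (f x) * \<Phi> \<bar>f x\<bar>",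
          OF G \<tau>_pos c sgn_layers])
  have "beta V wt f * vol V wt (?S j)
      \<le> beta_numerator V wt (Lset V f (\<tau> j)) (Rset V f (\<tau> j))" if j: "j < n" for j
  proof (rule beta_mult_vol_le[OF G D \<tau>_pos[OF j]])
    obtain v where "v \<in> V" "\<bar>f v\<bar> = \<tau> j" using \<tau>[OF j] by (auto simp: supp_def)
    then show "?S j \<noteq> {}" by (auto simp: Lset_def Rset_def abs_if split: if_splits)
  qed
  then have "beta V wt f * (\<Sum>j<n. c j * vol V wt (?S j))
      \<le> (\<Sum>j<n. c j * beta_numerator V wt (Lset V f (\<tau> j)) (Rset V f (\<tau> j)))"
    unfolding sum_distrib_left using c by (intro sum_mono) (simp add: mult.left_commute mult_left_mono)
  then show ?thesis unfolding lhs rhs .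
qed

section \<open>Rounding \<open>|f|\<close> to finitely many levels\<close>

text \<open>The primitive \<open>x \<mapsto> \<integral>\<^sub>0\<^sup>x d(s, T) ds\<close>; integrating from \<open>-1\<close> and subtracting makes it
  differentiable at \<open>0\<close> as well.\<close>
definition infdist_integral :: "real set \<Rightarrow> real \<Rightarrow> real" where
  "infdist_integral T x = integral {-1..x} (\<lambda>s. infdist s T) - integral {-1..0} (\<lambda>s. infdist s T)"

lemma infdist_integral_0 [simp]: "infdist_integral T 0 = 0"
  unfolding infdist_integral_def by simp

lemma has_real_derivative_infdist_integral:
  assumes "x > -1"
  shows "(infdist_integral T has_real_derivative infdist x T) (at x)"
proof -
  have "((\<lambda>y. integral {-1..y} (\<lambda>s. infdist s T)) has_real_derivative infdist x T)
          (at x within {-1..x+1})"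
    by (rule integral_has_real_derivative) (use assms in \<open>auto intro: continuous_intros\<close>)
  moreover have "at x within {-1..x+1} = at x"
    by (rule at_within_interior) (use assms in auto)
  ultimately show ?thesis
    unfolding infdist_integral_def[abs_def] by (auto intro!: derivative_eq_intros)
qed

lemma infdist_integral_mono:
  assumes "0 \<le> x" "x \<le> y"
  shows "infdist_integral T x \<le> infdist_integral T y"
  by (rule DERIV_nonneg_imp_nondecreasing[OF assms(2)])
     (use assms in \<open>auto intro!: exI[of _ "infdist _ T"] has_real_derivative_infdist_integral
                                  infdist_nonneg\<close>)

lemma infdist_integral_nonneg: "0 \<le> x \<Longrightarrow> infdist_integral T x \<ge> 0"
  using infdist_integral_mono[of 0 x T] by simp

text \<open>Since \<open>d(\<cdot>, T)\<close> is 1-Lipschitz, on \<open>[c, a]\<close> it lies below the average of its endpoint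
  values plus \<open>(a - c)/2\<close>.\<close>
lemma infdist_integral_diff_le:
  assumes "0 \<le> c" "c \<le> a"
  shows "infdist_integral T a - infdist_integral T c \<le> (a - c) * (infdist c T + infdist a T + (a - c)) / 2"
proof -
  define K where "K = (infdist c T + infdist a T + (a - c)) / 2"
  have "K * c - infdist_integral T c \<le> K * a - infdist_integral T a"
  proof (rule DERIV_nonneg_imp_nondecreasing[OF assms(2)])
    fix s assume s: "c \<le> s" "s \<le> a"
    have "infdist s T \<le> infdist c T + (s - c)" "infdist s T \<le> infdist a T + (a - s)"
      using infdist_triangle[of s T c] infdist_triangle[of s T a] s by (simp_all add: dist_real_def)
    then have "K - infdist s T \<ge> 0" unfolding K_def by simp
    moreover have "((\<lambda>s. K * s - infdist_integral T s) has_real_derivative K - infdist s T) (at s)"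
      using s assms by (auto intro!: derivative_eq_intros has_real_derivative_infdist_integral)
    ultimately show "\<exists>y. ((\<lambda>s. K * s - infdist_integral T s) has_real_derivative y) (at s) \<and> 0 \<le> y"
      by blast
  qed
  then have "infdist_integral T a - infdist_integral T c \<le> K * (a - c)" by (simp add: algebra_simps)
  then show ?thesis unfolding K_def by (simp add: mult.commute)
qed

lemma abs_infdist_integral_diff_le:
  assumes "0 \<le> a" "0 \<le> c"
  shows "\<bar>infdist_integral T a - infdist_integral T c\<bar>
       \<le> \<bar>a - c\<bar> * (infdist a T + infdist c T + \<bar>a - c\<bar>) / 2"
proof (cases "c \<le> a")
  case True
  then show ?thesis
    using infdist_integral_diff_le[OF assms(2) True, of T] infdist_integral_mono[OF assms(2) True, of T]
    by (simp add: algebra_simps)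
next
  case False
  then have ca: "a \<le> c" by simp
  then show ?thesis
    using infdist_integral_diff_le[OF assms(1) ca, of T] infdist_integral_mono[OF assms(1) ca, of T]
    by (simp add: algebra_simps abs_if)
qed

lemma infdist_integral_le_square:
  assumes "0 \<in> T" "0 \<le> a"
  shows "infdist_integral T a \<le> a * (infdist a T + a) / 2"
  using infdist_integral_diff_le[of 0 a T] assms by simp

lemma infdist_ge:
  fixes T :: "real set"
  assumes "T \<noteq> {}" "\<And>t. t \<in> T \<Longrightarrow> m \<le> \<bar>s - t\<bar>"
  shows "m \<le> infdist s T"
  unfolding infdist_notempty[OF assms(1)]
  by (rule cINF_greatest) (use assms in \<open>auto simp: dist_real_def\<close>)

text \<open>Across a gap \<open>(a, x)\<close> of \<open>T\<close> the integrand is the tent \<open>min (s - a) (x - s)\<close>.\<close>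
lemma infdist_integral_gap:
  fixes T :: "real set"
  assumes ne: "T \<noteq> {}" and lt: "a < x" and a0: "0 \<le> a"
    and gap: "\<And>t. t \<in> T \<Longrightarrow> t \<le> a \<or> t \<ge> x"
  shows "infdist_integral T x - infdist_integral T a \<ge> (x - a)\<^sup>2 / 4"
proof -
  define m where "m = (a + x) / 2"
  have dist_ge: "min (s - a) (x - s) \<le> infdist s T" if "a \<le> s" "s \<le> x" for s
    by (rule infdist_ge[OF ne]) (use gap that in fastforce)
  let ?\<Psi>1 = "\<lambda>s. infdist_integral T s - (s - a)\<^sup>2 / 2"
  let ?\<Psi>2 = "\<lambda>s. infdist_integral T s + (x - s)\<^sup>2 / 2"
  have "?\<Psi>1 a \<le> ?\<Psi>1 m"
  proof (rule DERIV_nonneg_imp_nondecreasing[of a m ?\<Psi>1])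
    fix s assume s: "a \<le> s" "s \<le> m"
    have "(?\<Psi>1 has_real_derivative infdist s T - (s - a)) (at s)"
      using s a0
      by (auto intro!: derivative_eq_intros has_real_derivative_infdist_integral simp: field_simps)
    moreover have "infdist s T - (s - a) \<ge> 0" using dist_ge[of s] s lt unfolding m_def by auto
    ultimately show "\<exists>y. (?\<Psi>1 has_real_derivative y) (at s) \<and> 0 \<le> y" by blast
  qed (use lt in \<open>simp add: m_def\<close>)
  moreover have "?\<Psi>2 m \<le> ?\<Psi>2 x"
  proof (rule DERIV_nonneg_imp_nondecreasing[of m x ?\<Psi>2])
    fix s assume s: "m \<le> s" "s \<le> x"
    have "(?\<Psi>2 has_real_derivative infdist s T - (x - s)) (at s)"
      using s a0 lt unfolding m_def
      by (auto intro!: derivative_eq_intros has_real_derivative_infdist_integral simp: field_simps)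
    moreover have "infdist s T - (x - s) \<ge> 0" using dist_ge[of s] s lt unfolding m_def by auto
    ultimately show "\<exists>y. (?\<Psi>2 has_real_derivative y) (at s) \<and> 0 \<le> y" by blast
  qed (use lt in \<open>simp add: m_def\<close>)
  moreover have "(m - a)\<^sup>2 = (x - a)\<^sup>2 / 4" "(x - m)\<^sup>2 = (x - a)\<^sup>2 / 4"
    unfolding m_def by (simp_all add: power2_eq_square field_simps)
  ultimately show ?thesis by simp
qed

lemma square_div_Suc_le:
  fixes a y n :: real
  assumes "n \<ge> 1"
  shows "(a + y)\<^sup>2 / (4 * (n + 1)) \<le> a\<^sup>2 / (4 * n) + y\<^sup>2 / 4"
proof -
  have "(a + y)\<^sup>2 * n \<le> (a\<^sup>2 + n * y\<^sup>2) * (n + 1)"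
    using zero_le_power2[of "a - n * y"] by (simp add: power2_eq_square algebra_simps)
  then show ?thesis using assms by (simp add: field_simps)
qed

text \<open>Induction over the points of \<open>T\<close> below \<open>x\<close>: the last gap contributes
  \<open>infdist_integral_gap\<close>, and \<open>square_div_Suc_le\<close> is the convexity step.\<close>
lemma infdist_integral_ge:
  fixes T :: "real set"
  assumes finT: "finite T" and T0: "0 \<in> T"
  shows "x > 0 \<Longrightarrow> infdist_integral T x \<ge> x\<^sup>2 / (4 * card {t\<in>T. t < x})"
proof (induction "card {t\<in>T. t < x}" arbitrary: x)
  case 0
  then show ?case using T0 finT by (auto simp: card_gt_0_iff)
next
  case (Suc n)
  let ?A = "{t\<in>T. t < x}"
  have finA: "finite ?A" using finT by simp
  have neA: "?A \<noteq> {}" using T0 Suc.prems by auto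
  define a where "a = Max ?A"
  have aA: "a \<in> ?A" unfolding a_def using Max_in[OF finA neA] .
  have a0: "a \<ge> 0" unfolding a_def using Max_ge[OF finA, of 0] T0 Suc.prems by auto
  have gap: "t \<le> a \<or> t \<ge> x" if "t \<in> T" for t
    using Max_ge[OF finA, of t] that unfolding a_def by force
  have step: "infdist_integral T x - infdist_integral T a \<ge> (x - a)\<^sup>2 / 4"
    by (rule infdist_integral_gap) (use T0 aA a0 gap in auto)
  show ?case
  proof (cases "a = 0")
    case True
    have "x\<^sup>2 / (4 * card ?A) \<le> x\<^sup>2 / 4"
      using neA finA by (intro divide_left_mono) (auto simp: card_gt_0_iff Suc_le_eq)
    then show ?thesis using step True by simp
  next
    case False
    then have apos: "a > 0" using a0 by simp
    have "?A = insert a {t\<in>T. t < a}" using aA gap by force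
    then have "card ?A = Suc (card {t\<in>T. t < a})" using finT by (simp add: card_insert_if)
    then have cn: "n = card {t\<in>T. t < a}" using Suc.hyps(2) by simp
    have IH: "infdist_integral T a \<ge> a\<^sup>2 / (4 * n)" using Suc.hyps(1)[OF cn apos] cn by simp
    have "n \<ge> 1" using cn T0 apos finT by (auto simp: Suc_le_eq card_gt_0_iff)
    then have "(a + (x - a))\<^sup>2 / (4 * (n + 1)) \<le> a\<^sup>2 / (4 * n) + (x - a)\<^sup>2 / 4"
      using square_div_Suc_le[of "real n" a "x - a"] by (simp add: algebra_simps)
    then show ?thesis using IH step Suc.hyps(2) by simp
  qed
qed

lemma infdist_integral_edge_le:
  fixes T :: "real set"
  assumes T0: "0 \<in> T"
  shows "\<bar>sgn y * infdist_integral T \<bar>y\<bar> + sgn z * infdist_integral T \<bar>z\<bar>\<bar>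
     \<le> ((y + z)\<^sup>2 + \<bar>y + z\<bar> * (infdist \<bar>y\<bar> T + infdist \<bar>z\<bar> T)) / 2"
proof (cases "y * z \<ge> 0")
  case True
  let ?a = "\<bar>y\<bar>" and ?b = "\<bar>z\<bar>" and ?d = "\<lambda>x. infdist x T"
  have "\<bar>sgn y * infdist_integral T ?a + sgn z * infdist_integral T ?b\<bar>
      \<le> infdist_integral T ?a + infdist_integral T ?b"
    using True infdist_integral_nonneg[of ?a T] infdist_integral_nonneg[of ?b T]
    by (auto simp: sgn_if zero_le_mult_iff)
  also have "\<dots> \<le> ?a * (?d ?a + ?a) / 2 + ?b * (?d ?b + ?b) / 2"
    using infdist_integral_le_square[OF T0] by (intro add_mono) auto
  also have "\<dots> \<le> ((?a + ?b)\<^sup>2 + (?a + ?b) * (?d ?a + ?d ?b)) / 2"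
    using mult_nonneg_nonneg[OF abs_ge_zero infdist_nonneg, of y "\<bar>z\<bar>" T]
      mult_nonneg_nonneg[OF abs_ge_zero infdist_nonneg, of z "\<bar>y\<bar>" T]
      mult_nonneg_nonneg[OF abs_ge_zero abs_ge_zero, of y z]
    by (simp add: power2_eq_square field_simps)
  also have "?a + ?b = \<bar>y + z\<bar>" using True by (auto simp: zero_le_mult_iff)
  finally show ?thesis by (simp add: power2_abs)
next
  case False
  then have "\<bar>sgn y * infdist_integral T \<bar>y\<bar> + sgn z * infdist_integral T \<bar>z\<bar>\<bar>
      = \<bar>infdist_integral T \<bar>y\<bar> - infdist_integral T \<bar>z\<bar>\<bar>"
    by (auto simp: sgn_if zero_le_mult_iff abs_minus_commute)
  also have "\<dots> \<le> \<bar>\<bar>y\<bar> - \<bar>z\<bar>\<bar> * (infdist \<bar>y\<bar> T + infdist \<bar>z\<bar> T + \<bar>\<bar>y\<bar> - \<bar>z\<bar>\<bar>) / 2"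
    by (rule abs_infdist_integral_diff_le) auto
  also have "\<bar>\<bar>y\<bar> - \<bar>z\<bar>\<bar> = \<bar>y + z\<bar>" using False by (auto simp: zero_le_mult_iff)
  finally show ?thesis by (simp add: power2_eq_square algebra_simps)
qed

lemma infdist_integral_ge_card:
  fixes T :: "real set"
  assumes "finite T" "0 \<in> T"
  shows "y\<^sup>2 / (4 * real (card T)) \<le> infdist_integral T \<bar>y\<bar>"
proof (cases "y = 0")
  case False
  have "0 \<in> {t\<in>T. t < \<bar>y\<bar>}" using assms False by simp
  then have "card {t\<in>T. t < \<bar>y\<bar>} \<ge> 1" "card {t\<in>T. t < \<bar>y\<bar>} \<le> card T"
    using assms by (auto simp: Suc_le_eq card_gt_0_iff intro: card_mono)
  then have "y\<^sup>2 / (4 * real (card T)) \<le> \<bar>y\<bar>\<^sup>2 / (4 * real (card {t\<in>T. t < \<bar>y\<bar>}))"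
    unfolding power2_abs by (intro divide_left_mono) auto
  also have "\<dots> \<le> infdist_integral T \<bar>y\<bar>"
    using infdist_integral_ge[OF assms, of "\<bar>y\<bar>"] False by simp
  finally show ?thesis .
qed simp

definition rounding_error :: "'a set \<Rightarrow> ('a \<Rightarrow> 'a \<Rightarrow> real) \<Rightarrow> ('a \<Rightarrow> real) \<Rightarrow> real \<Rightarrow> real set \<Rightarrow> real" where
  "rounding_error V wt f a T = (\<Sum>v\<in>V. deg V wt v * (if a \<le> \<bar>f v\<bar> then (infdist \<bar>f v\<bar> T)\<^sup>2 else 0))"

lemma rounding_error_nonneg:
  assumes "weighted_graph V wt"
  shows "rounding_error V wt f a T \<ge> 0"
  unfolding rounding_error_def by (intro sum_nonneg mult_nonneg_nonneg deg_nonneg[OF assms]) auto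

lemma edge_cross_term_le:
  assumes G: "weighted_graph V wt"
  shows "(\<Sum>e\<in>edges V wt. ew wt e * (\<bar>\<Sum>x\<in>e. f x\<bar> * (\<Sum>x\<in>e. g x)))
       \<le> sqrt (edge_energy V wt f * (2 * (\<Sum>v\<in>V. deg V wt v * (g v)\<^sup>2)))"
proof (rule real_le_rsqrt)
  let ?E = "edges V wt"
  have "(\<Sum>e\<in>?E. ew wt e * (\<bar>\<Sum>x\<in>e. f x\<bar> * (\<Sum>x\<in>e. g x)))
      = (\<Sum>e\<in>?E. (sqrt (ew wt e) * \<bar>\<Sum>x\<in>e. f x\<bar>) * (sqrt (ew wt e) * (\<Sum>x\<in>e. g x)))"
    using ew_nonneg[OF G] by (intro sum.cong refl) (simp add: algebra_simps real_sqrt_mult[symmetric])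
  then have "(\<Sum>e\<in>?E. ew wt e * (\<bar>\<Sum>x\<in>e. f x\<bar> * (\<Sum>x\<in>e. g x)))\<^sup>2
      \<le> (\<Sum>e\<in>?E. ew wt e * (\<Sum>x\<in>e. f x)\<^sup>2) * (\<Sum>e\<in>?E. ew wt e * (\<Sum>x\<in>e. g x)\<^sup>2)"
    using Cauchy_Schwarz_ineq_sum[of "\<lambda>e. sqrt (ew wt e) * \<bar>\<Sum>x\<in>e. f x\<bar>"
        "\<lambda>e. sqrt (ew wt e) * (\<Sum>x\<in>e. g x)" ?E] ew_nonneg[OF G]
    by (simp add: power_mult_distrib)
  also have "(\<Sum>e\<in>?E. ew wt e * (\<Sum>x\<in>e. g x)\<^sup>2) \<le> (\<Sum>e\<in>?E. ew wt e * (2 * (\<Sum>x\<in>e. (g x)\<^sup>2)))"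
  proof (rule sum_mono)
    fix e assume e: "e \<in> ?E"
    then obtain u v where "e = {u, v}" "u \<noteq> v" by (auto elim: edgesE)
    moreover have "(g u + g v)\<^sup>2 \<le> 2 * ((g u)\<^sup>2 + (g v)\<^sup>2)"
      using zero_le_power2[of "g u - g v"] by (simp add: power2_eq_square algebra_simps)
    ultimately show "ew wt e * (\<Sum>x\<in>e. g x)\<^sup>2 \<le> ew wt e * (2 * (\<Sum>x\<in>e. (g x)\<^sup>2))"
      using ew_nonneg[OF G e] by (simp add: mult_left_mono)
  qed
  also have "\<dots> = 2 * (\<Sum>v\<in>V. deg V wt v * (g v)\<^sup>2)"
    by (simp add: edges_handshake[OF G, of "\<lambda>x. (g x)\<^sup>2", symmetric] sum_distrib_left algebra_simps)
  finally show "(\<Sum>e\<in>?E. ew wt e * (\<bar>\<Sum>x\<in>e. f x\<bar> * (\<Sum>x\<in>e. g x)))\<^sup>2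
      \<le> edge_energy V wt f * (2 * (\<Sum>v\<in>V. deg V wt v * (g v)\<^sup>2))"
    using edge_energy_nonneg[OF G, of f] unfolding edge_energy_def by (simp add: mult_left_mono)
qed

lemma wnorm2_le_sum_infdist_integral:
  fixes T :: "real set"
  assumes G: "weighted_graph V wt" and T: "finite T" "0 \<in> T"
  shows "wnorm2 V wt f / (4 * real (card T)) \<le> (\<Sum>v\<in>V. deg V wt v * infdist_integral T \<bar>f v\<bar>)"
  unfolding wnorm2_def sum_divide_distrib
  by (intro sum_mono) (use infdist_integral_ge_card[OF T] deg_nonneg[OF G] in
      \<open>simp add: mult_left_mono flip: times_divide_eq_right\<close>)

lemma sum_edges_infdist_integral_le:
  fixes T :: "real set"
  assumes G: "weighted_graph V wt" and T0: "0 \<in> T"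
  shows "(\<Sum>e\<in>edges V wt. ew wt e * \<bar>\<Sum>x\<in>e. sgn (f x) * infdist_integral T \<bar>f x\<bar>\<bar>)
       \<le> (edge_energy V wt f + sqrt (2 * edge_energy V wt f * rounding_error V wt f 0 T)) / 2"
proof -
  let ?d = "\<lambda>x. infdist \<bar>f x\<bar> T"
  have "(\<Sum>e\<in>edges V wt. ew wt e * \<bar>\<Sum>x\<in>e. sgn (f x) * infdist_integral T \<bar>f x\<bar>\<bar>)
      \<le> (\<Sum>e\<in>edges V wt. ew wt e * (((\<Sum>x\<in>e. f x)\<^sup>2 + \<bar>\<Sum>x\<in>e. f x\<bar> * (\<Sum>x\<in>e. ?d x)) / 2))"
  proof (rule sum_mono)
    fix e assume e: "e \<in> edges V wt"
    then obtain u v where "e = {u, v}" "u \<noteq> v" by (auto elim: edgesE)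
    then have "\<bar>\<Sum>x\<in>e. sgn (f x) * infdist_integral T \<bar>f x\<bar>\<bar>
        \<le> ((\<Sum>x\<in>e. f x)\<^sup>2 + \<bar>\<Sum>x\<in>e. f x\<bar> * (\<Sum>x\<in>e. ?d x)) / 2"
      using infdist_integral_edge_le[OF T0, of "f u" "f v"] by simp
    then show "ew wt e * \<bar>\<Sum>x\<in>e. sgn (f x) * infdist_integral T \<bar>f x\<bar>\<bar>
        \<le> ew wt e * (((\<Sum>x\<in>e. f x)\<^sup>2 + \<bar>\<Sum>x\<in>e. f x\<bar> * (\<Sum>x\<in>e. ?d x)) / 2)"
      using ew_nonneg[OF G e] by (rule mult_left_mono)
  qed
  also have "\<dots> \<le> (edge_energy V wt f + sqrt (2 * edge_energy V wt f * rounding_error V wt f 0 T)) / 2"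
    using edge_cross_term_le[OF G, of f ?d]
    by (simp add: edge_energy_def rounding_error_def sum_divide_distrib[symmetric]
          sum.distrib distrib_left add_divide_distrib mult.assoc mult.left_commute)
  finally show ?thesis .
qed

lemma beta_le_rounding:
  fixes T :: "real set" and f :: "'a \<Rightarrow> real"
  assumes G: "weighted_graph V wt" and D: "\<forall>v\<in>V. deg V wt v \<ge> 1"
    and T: "finite T" "0 \<in> T"
  shows "beta V wt f * wnorm2 V wt f
       \<le> 2 * real (card T) * (edge_energy V wt f
            + sqrt (2 * edge_energy V wt f * rounding_error V wt f 0 T))"
    (is "_ \<le> 2 * real (card T) * ?B")
proof (cases "beta V wt f > 0")
  case True
  have "beta V wt f * (wnorm2 V wt f / (4 * real (card T)))
      \<le> beta V wt f * (\<Sum>v\<in>V. deg V wt v * infdist_integral T \<bar>f v\<bar>)"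
    using wnorm2_le_sum_infdist_integral[OF G T, of f] True by (rule mult_left_mono[OF _ less_imp_le])
  also have "\<dots> \<le> (\<Sum>e\<in>edges V wt. ew wt e * \<bar>\<Sum>x\<in>e. sgn (f x) * infdist_integral T \<bar>f x\<bar>\<bar>)"
    by (rule beta_coarea[OF G D infdist_integral_mono]) auto
  also have "\<dots> \<le> ?B / 2" by (rule sum_edges_infdist_integral_le[OF G T(2)])
  finally have "beta V wt f * (wnorm2 V wt f / (4 * real (card T))) \<le> ?B / 2" .
  moreover have "real (card T) > 0" using T by (auto simp: card_gt_0_iff)
  ultimately show ?thesis by (simp add: field_simps)
next
  case False
  have "wnorm2 V wt f \<ge> 0"
    unfolding wnorm2_def by (intro sum_nonneg mult_nonneg_nonneg deg_nonneg[OF G]) auto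
  then have "beta V wt f * wnorm2 V wt f \<le> 0" using False by (simp add: mult_nonpos_nonneg)
  also have "0 \<le> 2 * real (card T) * ?B"
    using edge_energy_nonneg[OF G] rounding_error_nonneg[OF G] by simp
  finally show ?thesis .
qed

lemma edge_energy_pos_of_beta_pos:
  assumes G: "weighted_graph V wt" and D: "\<forall>v\<in>V. deg V wt v \<ge> 1"
    and "wnorm2 V wt f = 1" "beta V wt f > 0"
  shows "edge_energy V wt f > 0"
proof -
  have "beta V wt f \<le> 2 * (edge_energy V wt f
          + sqrt (2 * edge_energy V wt f * rounding_error V wt f 0 {0}))"
    using beta_le_rounding[OF G D, of "{0}" f] assms(3) by simp
  then show ?thesis
    using edge_energy_nonneg[OF G, of f] assms(4) by (cases "edge_energy V wt f = 0") auto
qed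

section \<open>Tent functions\<close>

definition tent :: "real \<Rightarrow> real \<Rightarrow> real \<Rightarrow> real" where
  "tent a b x = max 0 (min (x - a) (b - x))"

definition tent_slice :: "('a \<Rightarrow> real) \<Rightarrow> real \<Rightarrow> real \<Rightarrow> 'a \<Rightarrow> real" where
  "tent_slice f a b v = sgn (f v) * tent a b \<bar>f v\<bar>"

lemma tent_nonneg: "tent a b x \<ge> 0"
  unfolding tent_def by simp

lemma tent_eq_0_of_le: "x \<le> a \<Longrightarrow> tent a b x = 0"
  unfolding tent_def by simp

lemma tent_ne_0_iff: "tent a b x \<noteq> 0 \<longleftrightarrow> a < x \<and> x < b"
  unfolding tent_def by (auto simp: max_def min_def)

lemma abs_tent_diff_le_clamp:
  assumes "\<alpha> \<le> \<beta>"
  shows "\<bar>tent \<alpha> \<beta> a - tent \<alpha> \<beta> c\<bar>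
       \<le> max (min a c) (min (max a c) \<beta>) - max (min a c) (min (max a c) \<alpha>)"
  using assms unfolding tent_def by (auto simp: max_def min_def split: if_splits)

text \<open>Each tent contributes at most the length of \<open>[min a c, max a c] \<inter> [t i, t (i + 1)]\<close>.\<close>
lemma sum_abs_tent_diff_le:
  assumes mono: "\<forall>i<p. t i \<le> t (Suc i)"
  shows "(\<Sum>i<p. \<bar>tent (t i) (t (Suc i)) a - tent (t i) (t (Suc i)) c\<bar>) \<le> \<bar>a - c\<bar>"
proof -
  define clamp where "clamp x = max (min a c) (min (max a c) x)" for x
  have "(\<Sum>i<p. \<bar>tent (t i) (t (Suc i)) a - tent (t i) (t (Suc i)) c\<bar>)
      \<le> (\<Sum>i<p. clamp (t (Suc i)) - clamp (t i))"
    using mono abs_tent_diff_le_clamp unfolding clamp_def by (intro sum_mono) auto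
  also have "\<dots> = clamp (t p) - clamp (t 0)" by (rule sum_lessThan_telescope)
  also have "\<dots> \<le> \<bar>a - c\<bar>" unfolding clamp_def by (auto simp: max_def min_def)
  finally show ?thesis .
qed

lemma chain_mono:
  fixes t :: "nat \<Rightarrow> real"
  assumes "\<forall>i<p. t i \<le> t (Suc i)" "i \<le> j" "j \<le> p"
  shows "t i \<le> t j"
  using assms(2,3)
proof (induction j rule: dec_induct)
  case (step j)
  have "t i \<le> t j" using step.IH step.prems by simp
  also have "t j \<le> t (Suc j)" using assms(1) step.prems by simp
  finally show ?case .
qed simp

lemma sum_abs_tent_slice_edge_le:
  assumes mono: "\<forall>i<p. t i \<le> t (Suc i)" and t0: "t 0 \<ge> 0"
  shows "(\<Sum>i<p. \<bar>tent_slice f (t i) (t (Suc i)) u + tent_slice f (t i) (t (Suc i)) v\<bar>)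
       \<le> \<bar>f u + f v\<bar>"
proof -
  let ?T = "\<lambda>i. tent (t i) (t (Suc i))"
  have T0: "?T i 0 = 0" if "i < p" for i
    using chain_mono[OF mono, of 0 i] that t0 by (simp add: tent_eq_0_of_le)
  show ?thesis
  proof (cases "f u * f v \<ge> 0")
    case True
    have "(\<Sum>i<p. \<bar>tent_slice f (t i) (t (Suc i)) u + tent_slice f (t i) (t (Suc i)) v\<bar>)
        \<le> (\<Sum>i<p. \<bar>?T i \<bar>f u\<bar> - ?T i 0\<bar>) + (\<Sum>i<p. \<bar>?T i \<bar>f v\<bar> - ?T i 0\<bar>)"
      unfolding sum.distrib[symmetric]
    proof (intro sum_mono)
      fix i assume "i \<in> {..<p}"
      then show "\<bar>tent_slice f (t i) (t (Suc i)) u + tent_slice f (t i) (t (Suc i)) v\<bar>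
          \<le> \<bar>?T i \<bar>f u\<bar> - ?T i 0\<bar> + \<bar>?T i \<bar>f v\<bar> - ?T i 0\<bar>"
        using True T0 tent_nonneg[of "t i" "t (Suc i)" "\<bar>f u\<bar>"] tent_nonneg[of "t i" "t (Suc i)" "\<bar>f v\<bar>"]
        unfolding tent_slice_def by (auto simp: sgn_if zero_le_mult_iff)
    qed
    also have "\<dots> \<le> \<bar>\<bar>f u\<bar> - 0\<bar> + \<bar>\<bar>f v\<bar> - 0\<bar>"
      by (intro add_mono sum_abs_tent_diff_le[OF mono])
    finally show ?thesis using True by (auto simp: zero_le_mult_iff)
  next
    case False
    have "(\<Sum>i<p. \<bar>tent_slice f (t i) (t (Suc i)) u + tent_slice f (t i) (t (Suc i)) v\<bar>)
        = (\<Sum>i<p. \<bar>?T i \<bar>f u\<bar> - ?T i \<bar>f v\<bar>\<bar>)"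
      unfolding tent_slice_def using False
      by (intro sum.cong refl) (auto simp: sgn_if zero_le_mult_iff abs_minus_commute)
    also have "\<dots> \<le> \<bar>\<bar>f u\<bar> - \<bar>f v\<bar>\<bar>" by (rule sum_abs_tent_diff_le[OF mono])
    finally show ?thesis using False by (auto simp: zero_le_mult_iff)
  qed
qed

lemma sum_power2_le_power2_sum:
  fixes x :: "'i \<Rightarrow> real"
  assumes "\<And>i. i \<in> I \<Longrightarrow> x i \<ge> 0"
  shows "(\<Sum>i\<in>I. (x i)\<^sup>2) \<le> (\<Sum>i\<in>I. x i)\<^sup>2"
proof (cases "finite I")
  case True
  have "(\<Sum>i\<in>I. (x i)\<^sup>2) \<le> (\<Sum>i\<in>I. x i * (\<Sum>j\<in>I. x j))"
  proof (rule sum_mono)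
    fix i assume i: "i \<in> I"
    have "x i \<le> (\<Sum>j\<in>I. x j)" using assms True i by (intro member_le_sum) auto
    then show "(x i)\<^sup>2 \<le> x i * (\<Sum>j\<in>I. x j)"
      using assms[OF i] by (simp add: power2_eq_square mult_left_mono)
  qed
  also have "\<dots> = (\<Sum>i\<in>I. x i)\<^sup>2" by (simp add: power2_eq_square sum_distrib_right)
  finally show ?thesis .
qed simp

lemma sum_edge_energy_tent_slices_le:
  assumes G: "weighted_graph V wt"
    and mono: "\<forall>i<p. t i \<le> t (Suc i)" and t0: "t 0 \<ge> 0"
  shows "(\<Sum>i<p. edge_energy V wt (tent_slice f (t i) (t (Suc i)))) \<le> edge_energy V wt f"
proof -
  let ?g = "\<lambda>i. tent_slice f (t i) (t (Suc i))"
  have "(\<Sum>i<p. (\<Sum>x\<in>e. ?g i x)\<^sup>2) \<le> (\<Sum>x\<in>e. f x)\<^sup>2" if e: "e \<in> edges V wt" for e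
  proof -
    obtain u v where uv: "e = {u, v}" "u \<noteq> v" using e by (auto elim: edgesE)
    have "(\<Sum>i<p. \<bar>?g i u + ?g i v\<bar>\<^sup>2) \<le> (\<Sum>i<p. \<bar>?g i u + ?g i v\<bar>)\<^sup>2"
      by (rule sum_power2_le_power2_sum) simp
    also have "\<dots> \<le> \<bar>f u + f v\<bar>\<^sup>2"
      by (intro power_mono sum_abs_tent_slice_edge_le[OF mono t0]) (simp add: sum_nonneg)
    finally show ?thesis using uv by simp
  qed
  moreover have "(\<Sum>i<p. edge_energy V wt (?g i))
      = (\<Sum>e\<in>edges V wt. ew wt e * (\<Sum>i<p. (\<Sum>x\<in>e. ?g i x)\<^sup>2))"
    unfolding edge_energy_def by (subst sum.swap) (simp add: sum_distrib_left)
  ultimately show ?thesis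
    unfolding edge_energy_def using ew_nonneg[OF G] by (simp add: sum_mono mult_left_mono)
qed

lemma wnorm2_tent_slice:
  assumes "0 \<le> a"
  shows "wnorm2 V wt (tent_slice f a b) = (\<Sum>v\<in>V. deg V wt v * (tent a b \<bar>f v\<bar>)\<^sup>2)"
  unfolding wnorm2_def tent_slice_def
  using assms by (intro sum.cong refl) (auto simp: power_mult_distrib sgn_if tent_eq_0_of_le)

lemma rounding_error_singleton_le:
  assumes G: "weighted_graph V wt" and "0 \<le> a" and small: "\<forall>v\<in>V. \<bar>f v\<bar> \<le> (a + b) / 2"
  shows "rounding_error V wt f a {a} \<le> wnorm2 V wt (tent_slice f a b)"
  unfolding rounding_error_def wnorm2_tent_slice[OF \<open>0 \<le> a\<close>]
proof (intro sum_mono mult_left_mono deg_nonneg[OF G])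
  fix v assume "v \<in> V"
  then show "(if a \<le> \<bar>f v\<bar> then (infdist \<bar>f v\<bar> {a})\<^sup>2 else 0) \<le> (tent a b \<bar>f v\<bar>)\<^sup>2"
    using small by (auto simp: tent_def dist_real_def)
qed

lemma rounding_error_insert_le:
  assumes G: "weighted_graph V wt" and "0 \<le> a" "a \<le> t\<^sub>1" "t\<^sub>1 \<in> T'"
  shows "rounding_error V wt f a (insert a T')
       \<le> wnorm2 V wt (tent_slice f a t\<^sub>1) + rounding_error V wt f t\<^sub>1 T'"
  unfolding rounding_error_def wnorm2_tent_slice[OF \<open>0 \<le> a\<close>] sum.distrib[symmetric]
    distrib_left[symmetric]
proof (intro sum_mono mult_left_mono deg_nonneg[OF G])
  fix v
  let ?x = "\<bar>f v\<bar>" and ?T = "insert a T'"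
  consider "?x < a" | "a \<le> ?x" "?x < t\<^sub>1" | "t\<^sub>1 \<le> ?x" by linarith
  then show "(if a \<le> ?x then (infdist ?x ?T)\<^sup>2 else 0)
      \<le> (tent a t\<^sub>1 ?x)\<^sup>2 + (if t\<^sub>1 \<le> ?x then (infdist ?x T')\<^sup>2 else 0)"
  proof cases
    case 2
    have "infdist ?x ?T \<le> ?x - a" "infdist ?x ?T \<le> t\<^sub>1 - ?x"
      using infdist_le[of a ?T ?x] infdist_le[of t\<^sub>1 ?T ?x] 2 assms(4)
      by (auto simp: dist_real_def)
    then have "infdist ?x ?T \<le> tent a t\<^sub>1 ?x" unfolding tent_def by linarith
    then show ?thesis using 2 by (simp add: power_mono infdist_nonneg)
  next
    case 3
    have "infdist ?x ?T \<le> infdist ?x T'"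
      by (rule infdist_mono) (use assms(4) in auto)
    then show ?thesis using 3 assms(3) by (simp add: power_mono infdist_nonneg add_increasing)
  qed simp
qed

lemma wnorm2_tent_slice_IVT:
  assumes "0 \<le> a" "a \<le> b" "\<mu> > 0" "\<mu> \<le> wnorm2 V wt (tent_slice f a b)"
  obtains t\<^sub>1 where "a < t\<^sub>1" "t\<^sub>1 \<le> b" "wnorm2 V wt (tent_slice f a t\<^sub>1) = \<mu>"
proof -
  let ?m = "\<lambda>b. wnorm2 V wt (tent_slice f a b)"
  have "continuous_on {a..b} ?m"
    unfolding wnorm2_def tent_slice_def tent_def by (intro continuous_intros)
  moreover have "tent a a x = 0" for x unfolding tent_def by (simp add: max_def min_def)
  then have "?m a = 0" unfolding wnorm2_def tent_slice_def by simp
  ultimately obtain t\<^sub>1 where "a \<le> t\<^sub>1" "t\<^sub>1 \<le> b" "?m t\<^sub>1 = \<mu>"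
    using IVT'[of ?m a \<mu> b] assms by auto
  moreover have "t\<^sub>1 \<noteq> a" using \<open>?m a = 0\<close> \<open>?m t\<^sub>1 = \<mu>\<close> assms(3) by auto
  ultimately show ?thesis by (intro that[of t\<^sub>1]) auto
qed

text \<open>Greedily cut off tents of mass \<open>\<mu>\<close> from \<open>[a, \<infinity>)\<close>; if this stops early, the left endpoints
  produced so far round \<open>|f|\<close> above \<open>a\<close> with error at most \<open>n \<mu>\<close>.\<close>
lemma tent_chain_or_rounding:
  assumes G: "weighted_graph V wt" and "\<mu> > 0"
  shows "0 \<le> a \<Longrightarrow>
     (\<exists>t. t 0 = a \<and> (\<forall>i<n. t i < t (Suc i) \<and> wnorm2 V wt (tent_slice f (t i) (t (Suc i))) = \<mu>))
   \<or> (\<exists>T. finite T \<and> a \<in> T \<and> card T \<le> n \<and> rounding_error V wt f a T \<le> n * \<mu>)"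
proof (induction n arbitrary: a)
  case 0
  show ?case by (intro disjI1 exI[of _ "\<lambda>_. a"]) simp
next
  case (Suc n)
  define b where "b = a + 2 * (\<Sum>v\<in>V. \<bar>f v\<bar>) + 1"
  have "finite V" using G unfolding weighted_graph_def by blast
  then have "\<bar>f v\<bar> \<le> (\<Sum>v\<in>V. \<bar>f v\<bar>)" if "v \<in> V" for v
    using that by (intro member_le_sum) auto
  then have small: "\<forall>v\<in>V. \<bar>f v\<bar> \<le> (a + b) / 2"
    unfolding b_def using Suc.prems by fastforce
  then have "a \<le> b" using Suc.prems unfolding b_def by (simp add: sum_nonneg)
  show ?case
  proof (cases "wnorm2 V wt (tent_slice f a b) < \<mu>")
    case True
    then have "rounding_error V wt f a {a} \<le> Suc n * \<mu>"
      using rounding_error_singleton_le[OF G Suc.prems small] \<open>\<mu> > 0\<close>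
      by (smt (verit) of_nat_Suc mult_le_cancel_right1 of_nat_0_le_iff)
    then show ?thesis by (intro disjI2 exI[of _ "{a}"]) simp
  next
    case False
    then obtain t\<^sub>1 where t\<^sub>1: "a < t\<^sub>1" "wnorm2 V wt (tent_slice f a t\<^sub>1) = \<mu>"
      using wnorm2_tent_slice_IVT[OF Suc.prems \<open>a \<le> b\<close> \<open>\<mu> > 0\<close>] by (metis not_less)
    have "0 \<le> t\<^sub>1" using t\<^sub>1(1) Suc.prems by simp
    from Suc.IH[OF this] show ?thesis
    proof (elim disjE exE conjE)
      fix t assume "t 0 = t\<^sub>1"
        and "\<forall>i<n. t i < t (Suc i) \<and> wnorm2 V wt (tent_slice f (t i) (t (Suc i))) = \<mu>"
      then show ?thesis
        using t\<^sub>1 by (intro disjI1 exI[of _ "case_nat a t"]) (auto simp: less_Suc_eq_0_disj)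
    next
      fix T' assume "finite T'" "t\<^sub>1 \<in> T'" "card T' \<le> n" "rounding_error V wt f t\<^sub>1 T' \<le> n * \<mu>"
      moreover note rounding_error_insert_le[where f=f, OF G Suc.prems less_imp_le[OF t\<^sub>1(1)] \<open>t\<^sub>1 \<in> T'\<close>]
      ultimately show ?thesis
        using t\<^sub>1 by (intro disjI2 exI[of _ "insert a T'"]) (auto simp: card_insert_if algebra_simps)
    qed
  qed
qed

lemma disjoint_supp_tent_slices:
  assumes mono: "\<forall>i<p. t i \<le> t (Suc i)" and "i < p" "j < p" "i \<noteq> j"
  shows "supp V (tent_slice f (t i) (t (Suc i))) \<inter> supp V (tent_slice f (t j) (t (Suc j))) = {}"
proof -
  have "t (Suc (min i j)) \<le> t (max i j)"
    using assms by (intro chain_mono[OF mono]) auto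
  then show ?thesis
    using \<open>i \<noteq> j\<close> by (auto simp: supp_def tent_slice_def tent_ne_0_iff min_def max_def split: if_splits)
qed

lemma supp_ne_empty_of_wnorm2_ne_0: "wnorm2 V wt h \<noteq> 0 \<Longrightarrow> supp V h \<noteq> {}"
  unfolding wnorm2_def supp_def by (auto intro: sum.neutral)

lemma card_le_threshold_ge:
  fixes x :: "nat \<Rightarrow> real"
  assumes nonneg: "\<forall>i<p. x i \<ge> 0" and sum: "(\<Sum>i<p. x i) \<le> (real (p - k) + 1) * L"
    and "L > 0" "k \<le> p"
  shows "k \<le> card {i. i < p \<and> x i \<le> L}"
proof -
  define B where "B = {i. i < p \<and> x i > L}"
  have "card B \<le> p - k"
  proof (rule ccontr)
    assume "\<not> card B \<le> p - k"
    then have "(real (p - k) + 1) * L \<le> real (card B) * L" using \<open>L > 0\<close> by simp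
    also have "\<dots> = (\<Sum>i\<in>B. L)" by simp
    also have "\<dots> < (\<Sum>i\<in>B. x i)"
    proof (rule sum_strict_mono)
      show "B \<noteq> {}" using \<open>\<not> card B \<le> p - k\<close> by auto
    qed (auto simp: B_def)
    also have "\<dots> \<le> (\<Sum>i<p. x i)" using nonneg by (intro sum_mono2) (auto simp: B_def)
    finally show False using sum by simp
  qed
  moreover have "card {i. i < p \<and> x i \<le> L} + card B = card ({i. i < p \<and> x i \<le> L} \<union> B)"
    by (rule card_Un_disjoint[symmetric]) (auto simp: B_def)
  moreover have "{i. i < p \<and> x i \<le> L} \<union> B = {..<p}" by (auto simp: B_def)
  ultimately show ?thesis using \<open>k \<le> p\<close> by simp
qed

lemma low_energy_tent_slices:
  assumes G: "weighted_graph V wt" and t0: "t 0 \<ge> 0"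
    and chain: "\<forall>i<p. t i < t (Suc i) \<and> wnorm2 V wt (tent_slice f (t i) (t (Suc i))) = \<mu>"
    and "\<mu> > 0" "\<rho> > 0" "k \<le> p"
    and energy: "edge_energy V wt f \<le> (real (p - k) + 1) * (\<rho> * \<mu>)"
  shows "\<exists>F :: nat \<Rightarrow> 'a \<Rightarrow> real.
           (\<forall>i<k. supp V (F i) \<noteq> {}) \<and>
           (\<forall>i<k. \<forall>j<k. i \<noteq> j \<longrightarrow> supp V (F i) \<inter> supp V (F j) = {}) \<and>
           (\<forall>i<k. Rplus V wt (F i) \<le> \<rho>)"
proof -
  let ?g = "\<lambda>i. tent_slice f (t i) (t (Suc i))"
  have mono: "\<forall>i<p. t i \<le> t (Suc i)" using chain by (simp add: less_imp_le)
  have "(\<Sum>i<p. edge_energy V wt (?g i)) \<le> (real (p - k) + 1) * (\<rho> * \<mu>)"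
    using sum_edge_energy_tent_slices_le[where f=f, OF G mono t0] energy by linarith
  then have "k \<le> card {i. i < p \<and> edge_energy V wt (?g i) \<le> \<rho> * \<mu>}"
    using \<open>\<mu> > 0\<close> \<open>\<rho> > 0\<close> \<open>k \<le> p\<close> edge_energy_nonneg[OF G]
    by (intro card_le_threshold_ge) auto
  then obtain S where S: "S \<subseteq> {i. i < p \<and> edge_energy V wt (?g i) \<le> \<rho> * \<mu>}" "card S = k"
    by (meson obtain_subset_with_card_n)
  moreover have "finite S" using S(1) finite_subset by fastforce
  ultimately obtain h where h: "bij_betw h {0..<k} S"
    using ex_bij_betw_nat_finite by blast
  then have hS: "\<And>j. j < k \<Longrightarrow> h j \<in> S" and h_inj: "inj_on h {0..<k}"
    by (auto simp: bij_betw_def)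
  have "supp V (?g (h j)) \<noteq> {}" if "j < k" for j
    using hS[OF that] S(1) chain \<open>\<mu> > 0\<close> by (intro supp_ne_empty_of_wnorm2_ne_0[where wt=wt]) auto
  moreover have "supp V (?g (h i)) \<inter> supp V (?g (h j)) = {}" if "i < k" "j < k" "i \<noteq> j" for i j
    using hS that S(1) inj_onD[OF h_inj, of i j] by (intro disjoint_supp_tent_slices[OF mono]) auto
  moreover have "Rplus V wt (?g (h j)) \<le> \<rho>" if "j < k" for j
    using hS[OF that] S(1) chain \<open>\<mu> > 0\<close> by (auto simp: Rplus_edge_energy divide_le_eq)
  ultimately show ?thesis by (intro exI[of _ "\<lambda>j. ?g (h j)"]) blast
qed

lemma rounding_bound_arith:
  fixes \<beta> E \<delta> c k :: real
  assumes "k > 0" "E > 0" "0 \<le> c" "c \<le> 2 * k"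
    and \<beta>: "\<beta> \<le> 2 * c * (E + sqrt (2 * E * \<delta>))"
    and \<delta>: "\<delta> \<le> 2 * k * (\<beta>\<^sup>2 / (256 * k\<^sup>2 * (k + 1) * E))"
  shows "\<beta> \<le> 8 * k * E"
proof -
  have "2 * E * \<delta> \<le> 2 * E * (2 * k * (\<beta>\<^sup>2 / (256 * k\<^sup>2 * (k + 1) * E)))"
    using mult_left_mono[OF \<delta>, of "2 * E"] assms(2) by simp
  also have "\<dots> = \<beta>\<^sup>2 / (64 * k * (k + 1))"
    using assms(1,2) by (simp add: divide_simps power2_eq_square)
  also have "\<dots> \<le> \<beta>\<^sup>2 / (64 * k\<^sup>2)"
    using assms(1) by (intro divide_left_mono) (auto simp: power2_eq_square algebra_simps
        intro!: mult_pos_pos add_pos_pos)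
  also have "\<dots> = (\<beta> / (8 * k))\<^sup>2" by (simp add: power2_eq_square)
  finally have "sqrt (2 * E * \<delta>) \<le> \<bar>\<beta>\<bar> / (8 * k)"
    using real_sqrt_le_mono assms(1) by (fastforce simp: abs_divide)
  then have scaled: "2 * (2 * k) * (E + sqrt (2 * E * \<delta>)) \<le> 4 * k * E + \<bar>\<beta>\<bar> / 2"
    using assms(1) by (simp add: field_simps)
  show ?thesis
  proof (cases "E + sqrt (2 * E * \<delta>) \<ge> 0")
    case True
    have "2 * c * (E + sqrt (2 * E * \<delta>)) \<le> 2 * (2 * k) * (E + sqrt (2 * E * \<delta>))"
      using True assms(4) by (intro mult_right_mono) auto
    then show ?thesis using \<beta> scaled mult_pos_pos[OF assms(1,2)] by (cases "\<beta> \<ge> 0") auto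
  next
    case False
    then have "2 * c * (E + sqrt (2 * E * \<delta>)) \<le> 0"
      using assms(3) by (intro mult_nonneg_nonpos) auto
    then show ?thesis using \<beta> mult_pos_pos[OF assms(1,2)] by simp
  qed
qed

theorem mainTheorem13:
  fixes V :: "'a set" and wt :: "'a \<Rightarrow> 'a \<Rightarrow> real" and f :: "'a \<Rightarrow> real" and k :: nat
  assumes "weighted_graph V wt"
    and "\<forall>v\<in>V. deg V wt v \<ge> 1"
    and "wnorm2 V wt f = 1"
    and "k \<ge> 1"
  shows "beta V wt f \<le> 8 * real k * Rplus V wt f
     \<or> (beta V wt f > 0 \<and>
        (\<exists>F :: nat \<Rightarrow> 'a \<Rightarrow> real.
           (\<forall>i<k. supp V (F i) \<noteq> {}) \<and>
           (\<forall>i<k. \<forall>j<k. i \<noteq> j \<longrightarrow> supp V (F i) \<inter> supp V (F j) = {}) \<and>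
           (\<forall>i<k. Rplus V wt (F i) \<le> 256 * (real k)\<^sup>2 * (Rplus V wt f)\<^sup>2 / (beta V wt f)\<^sup>2)))"
proof (cases "beta V wt f \<le> 8 * real k * Rplus V wt f")
  case False
  note G = assms(1) and D = assms(2)
  define \<beta> R where "\<beta> = beta V wt f" and "R = Rplus V wt f"
  have R: "R = edge_energy V wt f" using assms(3) by (simp add: R_def Rplus_edge_energy)
  have "8 * real k * R \<ge> 0" using edge_energy_nonneg[OF G] by (simp add: R)
  then have "\<beta> > 0" using False by (simp add: \<beta>_def R_def)
  then have "R > 0" using edge_energy_pos_of_beta_pos[OF G D assms(3)] by (simp add: \<beta>_def R)
  define \<mu> where "\<mu> = \<beta>\<^sup>2 / (256 * (real k)\<^sup>2 * (real k + 1) * R)"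
  define \<rho> where "\<rho> = 256 * (real k)\<^sup>2 * R\<^sup>2 / \<beta>\<^sup>2"
  have "\<mu> > 0" "\<rho> > 0" using \<open>R > 0\<close> \<open>\<beta> > 0\<close> assms(4) by (simp_all add: \<mu>_def \<rho>_def)
  from tent_chain_or_rounding[OF G \<open>\<mu> > 0\<close> order_refl, of "2 * k" f]
  show ?thesis
  proof (elim disjE exE conjE)
    fix t assume "t 0 = 0"
      and "\<forall>i<2 * k. t i < t (Suc i) \<and> wnorm2 V wt (tent_slice f (t i) (t (Suc i))) = \<mu>"
    moreover have "\<rho> * \<mu> = R / (real k + 1)"
      using \<open>R > 0\<close> \<open>\<beta> > 0\<close> assms(4) unfolding \<mu>_def \<rho>_def
      by (simp add: divide_simps power2_eq_square)
    then have "edge_energy V wt f \<le> (real (2 * k - k) + 1) * (\<rho> * \<mu>)"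
      by (simp add: R[symmetric])
    ultimately have "\<exists>F :: nat \<Rightarrow> 'a \<Rightarrow> real. (\<forall>i<k. supp V (F i) \<noteq> {}) \<and>
        (\<forall>i<k. \<forall>j<k. i \<noteq> j \<longrightarrow> supp V (F i) \<inter> supp V (F j) = {}) \<and> (\<forall>i<k. Rplus V wt (F i) \<le> \<rho>)"
      by (intro low_energy_tent_slices[OF G _ _ \<open>\<mu> > 0\<close> \<open>\<rho> > 0\<close>]) auto
    then show ?thesis using \<open>\<beta> > 0\<close> by (simp add: \<beta>_def R_def \<rho>_def)
  next
    fix T assume "finite T" "0 \<in> T" "card T \<le> 2 * k" "rounding_error V wt f 0 T \<le> real (2 * k) * \<mu>"
    then have "\<beta> \<le> 8 * real k * R"
      using beta_le_rounding[OF G D, of T f] assms(3,4) \<open>R > 0\<close>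
      by (intro rounding_bound_arith[of "real k" R "real (card T)"]) (auto simp: \<beta>_def R \<mu>_def)
    then show ?thesis using False by (simp add: \<beta>_def R_def)
  qed
qed simp

end
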